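(* Let $M\ge3$, $\phi\in\mathrm{Hyp}^M$, $K\ge1$, $\mu\ge1$, and let $\tau_1,\tau_2$ be caps of side length $\mu^{1/2}K^{-1}$ with centers $z_1^c,z_2^c\in\Sigma$. Suppose that $$|t^1_{z_2^c}(z_1^c,z_2^c)|\ge 50\mu^{1/2}K^{-1}\quad\text{and}\quad |t^2_{z_2^c}(z_1^c,z_2^c)|\ge50\mu^{1/2}K^{-1}.$$ Then $$|\Gamma_z(z_1,z_2,z_1',z_2')|\ge 4\mu K^{-2}\qquad\text{for all } z_1,z_1'\in\tau_1,\ z,z_2,z_2'\in\tau_2.$$
   Context: $\Sigma:=[-1,1]^2$, $2\Sigma:=[-2,2]^2$. $\mathrm{Hyp}^M$ ($M\ge3$) is the set of $\phi\in C^M(\Sigma)$ extending to a $C^M$ function on $2\Sigma$ with $\phi(0)=0$, $\nabla\phi(0)=0$, $D^2\phi(0)=\begin{pmatrix}0&1\\1&0\end{pmatrix}$, and $\sup_{2\Sigma}|\partial_x^a\partial_y^b\phi|\le10^{-5}$ for $3\le a+b\le M$. A cap of side length $s$ with center $z^c$ is the closed axis-parallel square of side length $s$ centered at $z^c$, intersected with $\Sigma$. Set $H:=\phi_{xy}^2-\phi_{xx}\phi_{yy}$, $A:=\frac{\phi_{yy}}{\phi_{xy}+\sqrt H}$, $B:=\frac{\phi_{xx}}{\phi_{xy}+\sqrt H}$; $t^1_z(z_1,z_2):=\phi_x(z_2)-\phi_x(z_1)-B(z)(\phi_y(z_2)-\phi_y(z_1))$, $t^2_z(z_1,z_2):=\phi_y(z_2)-\phi_y(z_1)-A(z)(\phi_x(z_2)-\phi_x(z_1))$,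 and $\Gamma_z(z_1,z_2,z_1',z_2'):=\langle (D^2\phi(z))^{-1}(\nabla\phi(z_2)-\nabla\phi(z_1)),\nabla\phi(z_2')-\nabla\phi(z_1')\rangle$. *)

theory Defs
  imports "HOL-Analysis.Analysis"
begin

definition Sigma1 :: "(real \<times> real) set" where
  "Sigma1 = {-1..1} \<times> {-1..1}"

definition Sigma2 :: "(real \<times> real) set" where
  "Sigma2 = {-2..2} \<times> {-2..2}"

text \<open>C^M on the closed square 2Sigma: a family D a b of functions (intended: the partial
  derivative d_x^a d_y^b phi) with D 0 0 = phi on 2Sigma, each D a b (a+b < M) having
  (one-sided at the boundary) partial derivatives D (a+1) b in x and D a (b+1) in y
  within 2Sigma, and all D a b with a+b \<le> M continuous on 2Sigma.\<close>

definition CM_derivs :: "nat \<Rightarrow> (real \<times> real \<Rightarrow> real) \<Rightarrow> (nat \<Rightarrow> nat \<Rightarrow> real \<times> real \<Rightarrow> real) \<Rightarrow> bool" where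
  "CM_derivs M phi D \<longleftrightarrow>
     (\<forall>z\<in>Sigma2. D 0 0 z = phi z) \<and>
     (\<forall>a b. a + b \<le> M \<longrightarrow> continuous_on Sigma2 (D a b)) \<and>
     (\<forall>a b. a + b < M \<longrightarrow> (\<forall>z\<in>Sigma2.
        ((\<lambda>t. D a b (t, snd z)) has_real_derivative D (Suc a) b z) (at (fst z) within {-2..2}) \<and>
        ((\<lambda>t. D a b (fst z, t)) has_real_derivative D a (Suc b) z) (at (snd z) within {-2..2})))"

definition Hyp :: "nat \<Rightarrow> (real \<times> real \<Rightarrow> real) set" where
  "Hyp M = {phi. \<exists>D. CM_derivs M phi D \<and>
     phi (0,0) = 0 \<and> D 1 0 (0,0) = 0 \<and> D 0 1 (0,0) = 0 \<and>
     D 2 0 (0,0) = 0 \<and> D 1 1 (0,0) = 1 \<and> D 0 2 (0,0) = 0 \<and>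
     (\<forall>a b. 3 \<le> a + b \<and> a + b \<le> M \<longrightarrow> (\<forall>z\<in>Sigma2. \<bar>D a b z\<bar> \<le> 10 powi (-5)))}"

text \<open>Partial derivatives (used at points of Sigma, which lie in the interior of 2Sigma).\<close>

definition px :: "(real \<times> real \<Rightarrow> real) \<Rightarrow> real \<times> real \<Rightarrow> real" where
  "px f z = deriv (\<lambda>t. f (t, snd z)) (fst z)"

definition py :: "(real \<times> real \<Rightarrow> real) \<Rightarrow> real \<times> real \<Rightarrow> real" where
  "py f z = deriv (\<lambda>t. f (fst z, t)) (snd z)"

definition phi_xx where "phi_xx phi = px (px phi)"
definition phi_xy where "phi_xy phi = py (px phi)"
definition phi_yy where "phi_yy phi = py (py phi)"

definition Hfun :: "(real \<times> real \<Rightarrow> real) \<Rightarrow> real \<times> real \<Rightarrow> real" where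
  "Hfun phi z = (phi_xy phi z)\<^sup>2 - phi_xx phi z * phi_yy phi z"

definition Afun :: "(real \<times> real \<Rightarrow> real) \<Rightarrow> real \<times> real \<Rightarrow> real" where
  "Afun phi z = phi_yy phi z / (phi_xy phi z + sqrt (Hfun phi z))"

definition Bfun :: "(real \<times> real \<Rightarrow> real) \<Rightarrow> real \<times> real \<Rightarrow> real" where
  "Bfun phi z = phi_xx phi z / (phi_xy phi z + sqrt (Hfun phi z))"

definition t1 :: "(real \<times> real \<Rightarrow> real) \<Rightarrow> real \<times> real \<Rightarrow> real \<times> real \<Rightarrow> real \<times> real \<Rightarrow> real" where
  "t1 phi z z1 z2 = px phi z2 - px phi z1 - Bfun phi z * (py phi z2 - py phi z1)"

definition t2 :: "(real \<times> real \<Rightarrow> real) \<Rightarrow> real \<times> real \<Rightarrow> real \<times> real \<Rightarrow> real \<times> real \<Rightarrow> real" where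
  "t2 phi z z1 z2 = py phi z2 - py phi z1 - Afun phi z * (px phi z2 - px phi z1)"

text \<open>Gamma_z: <(D^2 phi(z))^{-1} u, v> with u = grad phi(z2) - grad phi(z1),
  v = grad phi(z2') - grad phi(z1'); the inverse of the symmetric 2x2 Hessian
  [[p,q],[q,r]] is written out as (1/(pr-q^2)) [[r,-q],[-q,p]].\<close>

definition Gamma :: "(real \<times> real \<Rightarrow> real) \<Rightarrow> real \<times> real \<Rightarrow> real \<times> real \<Rightarrow> real \<times> real
    \<Rightarrow> real \<times> real \<Rightarrow> real \<times> real \<Rightarrow> real" where
  "Gamma phi z z1 z2 z1' z2' =
    (let p = phi_xx phi z; q = phi_xy phi z; r = phi_yy phi z; d = p * r - q\<^sup>2;
         u1 = px phi z2 - px phi z1; u2 = py phi z2 - py phi z1;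
         v1 = px phi z2' - px phi z1'; v2 = py phi z2' - py phi z1'
     in ((r * u1 - q * u2) / d) * v1 + ((- q * u1 + p * u2) / d) * v2)"

definition cap :: "real \<Rightarrow> real \<times> real \<Rightarrow> (real \<times> real) set" where
  "cap s c = ({fst c - s/2 .. fst c + s/2} \<times> {snd c - s/2 .. snd c + s/2}) \<inter> Sigma1"

end

theory Submission
  imports Defs
begin

text \<open>Write \<open>\<ell>\<^sub>1(u) = u\<^sub>1 - B u\<^sub>2\<close> and \<open>\<ell>\<^sub>2(u) = u\<^sub>2 - A u\<^sub>1\<close>, with \<open>A, B\<close> the
  coefficients of \<open>t\<^sup>1, t\<^sup>2\<close>. The bilinear form \<open>\<langle>(D\<^sup>2\<phi>(z))\<^sup>-\<^sup>1u, v\<rangle>\<close> of the indefinite Hessian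
  equals \<open>c(z) (\<ell>\<^sub>1(u) \<ell>\<^sub>2(v) + \<ell>\<^sub>2(u) \<ell>\<^sub>1(v))\<close> with \<open>c(z) \<ge> 1/2\<close>, since \<open>D\<^sup>2\<phi>\<close> is within
  \<open>10\<^sup>-\<^sup>4\<close> of \<open>[[0,1],[1,0]]\<close>. Put \<open>s = \<mu>\<^sup>1\<^sup>/\<^sup>2K\<^sup>-\<^sup>1\<close>. On the caps, \<open>\<nabla>\<phi>\<close> is 2-Lipschitz, so the
  gradient increments move by at most \<open>4s\<close>, and the third derivatives are tiny, so \<open>A, B\<close>
  move by at most \<open>10\<^sup>-\<^sup>5s\<close>. Hence every \<open>\<ell>\<close>-value is within \<open>5s\<close> of \<open>t\<^sup>1\<close> or \<open>t\<^sup>2\<close> at the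
  centres, which have modulus at least \<open>50s\<close>; both products then have the same sign and
  modulus at least \<open>(45s)\<^sup>2\<close>, so \<open>|\<Gamma>| \<ge> (45s)\<^sup>2 \<ge> 4s\<^sup>2\<close>.\<close>

definition taxicab_dist :: "real \<times> real \<Rightarrow> real \<times> real \<Rightarrow> real" where
  "taxicab_dist z z' = \<bar>fst z - fst z'\<bar> + \<bar>snd z - snd z'\<bar>"

text \<open>\<open>px\<close> and \<open>py\<close> are two-sided derivatives, so identifying them with the one-sided
  derivatives of \<open>CM_derivs\<close> needs an open neighbourhood inside \<open>2\<Sigma>\<close>.\<close>

definition open_square :: "(real \<times> real) set" where
  "open_square = {-2<..<2} \<times> {-2<..<2}"

lemma Sigma1_subset_open_square: "Sigma1 \<subseteq> open_square"
  by (auto simp: Sigma1_def open_square_def)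

lemma open_square_subset_Sigma2: "open_square \<subseteq> Sigma2"
  by (auto simp: Sigma2_def open_square_def)

lemma taxicab_dist_Sigma1: "z \<in> Sigma1 \<Longrightarrow> z' \<in> Sigma1 \<Longrightarrow> taxicab_dist z z' \<le> 4"
  by (auto simp: Sigma1_def taxicab_dist_def abs_le_iff)

lemma taxicab_dist_Sigma2: "z \<in> Sigma2 \<Longrightarrow> z' \<in> Sigma2 \<Longrightarrow> taxicab_dist z z' \<le> 8"
  by (auto simp: Sigma2_def taxicab_dist_def abs_le_iff)

lemma cap_subset_Sigma1: "cap s c \<subseteq> Sigma1"
  by (auto simp: cap_def)

lemma taxicab_dist_cap: "w \<in> cap s c \<Longrightarrow> taxicab_dist w c \<le> s"
  by (auto simp: cap_def taxicab_dist_def abs_le_iff)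

lemma CM_derivs_lipschitz:
  assumes CM: "CM_derivs M phi D" and ab: "a + b < M"
    and bound: "\<And>w. w \<in> Sigma2 \<Longrightarrow> \<bar>D (Suc a) b w\<bar> \<le> C \<and> \<bar>D a (Suc b) w\<bar> \<le> C"
    and z: "z \<in> Sigma2" and z': "z' \<in> Sigma2"
  shows "\<bar>D a b z - D a b z'\<bar> \<le> C * taxicab_dist z z'"
proof -
  obtain x y x' y' where zz': "z = (x, y)" "z' = (x', y')" by (cases z, cases z')
  have I: "x \<in> {-2..2}" "y \<in> {-2..2}" "x' \<in> {-2..2}" "y' \<in> {-2..2}"
    using z z' zz' by (auto simp: Sigma2_def)
  have "\<bar>D a b (x, y) - D a b (x', y)\<bar> \<le> C * \<bar>x - x'\<bar>"
    using field_differentiable_bound[of "{-2..2}" "\<lambda>t. D a b (t, y)" "\<lambda>t. D (Suc a) b (t, y)"]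
      CM ab bound I unfolding CM_derivs_def Sigma2_def by fastforce
  moreover have "\<bar>D a b (x', y) - D a b (x', y')\<bar> \<le> C * \<bar>y - y'\<bar>"
    using field_differentiable_bound[of "{-2..2}" "\<lambda>t. D a b (x', t)" "\<lambda>t. D a (Suc b) (x', t)"]
      CM ab bound I unfolding CM_derivs_def Sigma2_def by fastforce
  ultimately show ?thesis
    unfolding zz' taxicab_dist_def by (simp add: distrib_left)
qed

lemma px_eq_CM_deriv:
  assumes CM: "CM_derivs M phi D" and ab: "a + b < M"
    and f: "\<And>w. w \<in> open_square \<Longrightarrow> f w = D a b w" and z: "z \<in> open_square"
  shows "px f z = D (Suc a) b z"
proof -
  obtain x y where z_eq: "z = (x, y)" by (cases z)
  have x: "x \<in> {-2<..<2}" and y: "y \<in> {-2<..<2}" using z z_eq by (auto simp: open_square_def)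
  have "((\<lambda>t. D a b (t, y)) has_real_derivative D (Suc a) b (x, y)) (at x within {-2..2})"
    using CM ab x y unfolding CM_derivs_def Sigma2_def by fastforce
  then have "((\<lambda>t. D a b (t, y)) has_real_derivative D (Suc a) b (x, y)) (at x)"
    using x by (simp add: at_within_Icc_at)
  then have "((\<lambda>t. f (t, y)) has_real_derivative D (Suc a) b (x, y)) (at x)"
    by (rule has_field_derivative_transform_within_open[where S = "{-2<..<2}"])
      (use x y f in \<open>auto simp: open_square_def\<close>)
  then show ?thesis unfolding px_def z_eq by (simp add: DERIV_imp_deriv)
qed

lemma py_eq_CM_deriv:
  assumes CM: "CM_derivs M phi D" and ab: "a + b < M"
    and f: "\<And>w. w \<in> open_square \<Longrightarrow> f w = D a b w" and z: "z \<in> open_square"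
  shows "py f z = D a (Suc b) z"
proof -
  obtain x y where z_eq: "z = (x, y)" by (cases z)
  have x: "x \<in> {-2<..<2}" and y: "y \<in> {-2<..<2}" using z z_eq by (auto simp: open_square_def)
  have "((\<lambda>t. D a b (x, t)) has_real_derivative D a (Suc b) (x, y)) (at y within {-2..2})"
    using CM ab x y unfolding CM_derivs_def Sigma2_def by fastforce
  then have "((\<lambda>t. D a b (x, t)) has_real_derivative D a (Suc b) (x, y)) (at y)"
    using y by (simp add: at_within_Icc_at)
  then have "((\<lambda>t. f (x, t)) has_real_derivative D a (Suc b) (x, y)) (at y)"
    by (rule has_field_derivative_transform_within_open[where S = "{-2<..<2}"])
      (use x y f in \<open>auto simp: open_square_def\<close>)
  then show ?thesis unfolding py_def z_eq by (simp add: DERIV_imp_deriv)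
qed

definition near_standard_hessian :: "real \<Rightarrow> real \<Rightarrow> real \<Rightarrow> bool" where
  "near_standard_hessian p q r \<longleftrightarrow> \<bar>p\<bar> \<le> 1/10 \<and> \<bar>q - 1\<bar> \<le> 1/10 \<and> \<bar>r\<bar> \<le> 1/10"

definition hyp_coeff :: "real \<Rightarrow> real \<Rightarrow> real \<Rightarrow> real" where
  "hyp_coeff p q r = p / (q + sqrt (q\<^sup>2 - p * r))"

lemma t1_eq_hyp_coeff:
  "t1 phi z z1 z2 = px phi z2 - px phi z1
     - hyp_coeff (phi_xx phi z) (phi_xy phi z) (phi_yy phi z) * (py phi z2 - py phi z1)"
  by (simp add: t1_def Bfun_def Hfun_def hyp_coeff_def)

lemma t2_eq_hyp_coeff:
  "t2 phi z z1 z2 = py phi z2 - py phi z1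
     - hyp_coeff (phi_yy phi z) (phi_xy phi z) (phi_xx phi z) * (px phi z2 - px phi z1)"
  by (simp add: t2_def Afun_def Hfun_def hyp_coeff_def mult.commute)

lemma near_standard_hessian_commute:
  "near_standard_hessian p q r \<Longrightarrow> near_standard_hessian r q p"
  by (auto simp: near_standard_hessian_def)

lemma near_standard_hessian_bounds:
  assumes "near_standard_hessian p q r"
  shows "4/5 \<le> q\<^sup>2 - p * r" "q\<^sup>2 - p * r \<le> 61/50"
    "89/100 \<le> sqrt (q\<^sup>2 - p * r)" "179/100 \<le> q + sqrt (q\<^sup>2 - p * r)"
    "q + sqrt (q\<^sup>2 - p * r) \<le> 221/100"
proof -
  have p: "\<bar>p\<bar> \<le> 1/10" and q: "9/10 \<le> q" "q \<le> 11/10" and r: "\<bar>r\<bar> \<le> 1/10"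
    using assms unfolding near_standard_hessian_def abs_le_iff by linarith+
  have "\<bar>p * r\<bar> \<le> 1/10 * (1/10)"
    unfolding abs_mult using p r by (intro mult_mono) auto
  moreover have "(9/10)\<^sup>2 \<le> q\<^sup>2" "q\<^sup>2 \<le> (11/10)\<^sup>2"
    using q by (intro power_mono; simp)+
  ultimately show H: "4/5 \<le> q\<^sup>2 - p * r" "q\<^sup>2 - p * r \<le> 61/50"
    by (auto simp: power2_eq_square abs_le_iff)
  have "sqrt ((89/100)\<^sup>2) \<le> sqrt (q\<^sup>2 - p * r)" "sqrt (q\<^sup>2 - p * r) \<le> sqrt ((111/100)\<^sup>2)"
    using H by (intro real_sqrt_le_mono; simp add: power2_eq_square)+
  then show "89/100 \<le> sqrt (q\<^sup>2 - p * r)" "179/100 \<le> q + sqrt (q\<^sup>2 - p * r)"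
    "q + sqrt (q\<^sup>2 - p * r) \<le> 221/100"
    using q by simp_all
qed

lemma hyp_coeff_bound:
  assumes "near_standard_hessian p q r"
  shows "\<bar>hyp_coeff p q r\<bar> \<le> 1/10"
proof -
  note bounds = near_standard_hessian_bounds[OF assms]
  have "\<bar>hyp_coeff p q r\<bar> = \<bar>p\<bar> / (q + sqrt (q\<^sup>2 - p * r))"
    using bounds by (simp add: hyp_coeff_def abs_divide)
  also have "\<dots> \<le> (1/10) / (179/100)"
    using assms bounds by (intro frac_le) (auto simp: near_standard_hessian_def)
  also have "\<dots> \<le> 1/10" by simp
  finally show ?thesis .
qed

lemma hyp_coeff_lipschitz:
  assumes hess: "near_standard_hessian p q r" and hess0: "near_standard_hessian p0 q0 r0"
    and close: "\<bar>p - p0\<bar> \<le> e" "\<bar>q - q0\<bar> \<le> e" "\<bar>r - r0\<bar> \<le> e"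
  shows "\<bar>hyp_coeff p q r - hyp_coeff p0 q0 r0\<bar> \<le> e"
proof -
  define H H0 where "H = q\<^sup>2 - p * r" and "H0 = q0\<^sup>2 - p0 * r0"
  define P P0 where "P = q + sqrt H" and "P0 = q0 + sqrt H0"
  note bounds = near_standard_hessian_bounds[OF hess, folded H_def, folded P_def]
  note bounds0 = near_standard_hessian_bounds[OF hess0, folded H0_def, folded P0_def]
  have p0: "\<bar>p0\<bar> \<le> 1/10" and r0: "\<bar>r0\<bar> \<le> 1/10" and p: "\<bar>p\<bar> \<le> 1/10"
    and q: "\<bar>q - 1\<bar> \<le> 1/10" "\<bar>q0 - 1\<bar> \<le> 1/10"
    using hess hess0 unfolding near_standard_hessian_def by auto
  have qq: "\<bar>q + q0\<bar> \<le> 22/10" using q by linarith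
  have e: "0 \<le> e" using close(1) by linarith
  have "H - H0 = (q - q0) * (q + q0) - p * (r - r0) - r0 * (p - p0)"
    unfolding H_def H0_def by (simp add: algebra_simps power2_eq_square)
  moreover have "\<bar>(q - q0) * (q + q0)\<bar> \<le> e * (22/10)"
    unfolding abs_mult using close(2) qq by (intro mult_mono) auto
  moreover have "\<bar>p * (r - r0)\<bar> \<le> 1/10 * e" "\<bar>r0 * (p - p0)\<bar> \<le> 1/10 * e"
    unfolding abs_mult using close p r0 by (intro mult_mono; simp)+
  ultimately have dH: "\<bar>H - H0\<bar> \<le> 24/10 * e" by linarith
  have "\<bar>sqrt H - sqrt H0\<bar> * (sqrt H + sqrt H0) = \<bar>H - H0\<bar>"
    using bounds(1) bounds0(1) abs_mult[of "sqrt H - sqrt H0" "sqrt H + sqrt H0"]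
    by (simp add: algebra_simps)
  moreover have "\<bar>sqrt H - sqrt H0\<bar> * (178/100) \<le> \<bar>sqrt H - sqrt H0\<bar> * (sqrt H + sqrt H0)"
    using bounds bounds0 by (intro mult_left_mono) auto
  ultimately have "\<bar>sqrt H - sqrt H0\<bar> * (178/100) \<le> 24/10 * e" using dH by linarith
  then have "\<bar>sqrt H - sqrt H0\<bar> \<le> 15/10 * e" using e by simp
  then have dP: "\<bar>P0 - P\<bar> \<le> 25/10 * e" unfolding P_def P0_def using close(2) by linarith
  have "\<bar>(p - p0) * P0\<bar> \<le> e * (221/100)"
    unfolding abs_mult using close(1) bounds0 by (intro mult_mono) auto
  moreover have "\<bar>p0 * (P0 - P)\<bar> \<le> 1/10 * (25/10 * e)"
    unfolding abs_mult using dP p0 by (intro mult_mono) auto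
  ultimately have num: "\<bar>(p - p0) * P0 + p0 * (P0 - P)\<bar> \<le> e * (221/100) + 1/10 * (25/10 * e)"
    using abs_triangle_ineq[of "(p - p0) * P0" "p0 * (P0 - P)"] by linarith
  have "p / P - p0 / P0 = ((p - p0) * P0 + p0 * (P0 - P)) / (P * P0)"
    using bounds bounds0 by (simp add: field_simps)
  then have "\<bar>p / P - p0 / P0\<bar> = \<bar>(p - p0) * P0 + p0 * (P0 - P)\<bar> / (P * P0)"
    using bounds bounds0 by simp
  also have "\<dots> \<le> (e * (221/100) + 1/10 * (25/10 * e)) / (179/100 * (179/100))"
    using num bounds bounds0 e by (intro frac_le mult_mono) auto
  also have "\<dots> \<le> e" using e by simp
  finally show ?thesis unfolding hyp_coeff_def H_def H0_def P_def P0_def .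
qed

lemma Gamma_form_factorization:
  fixes p q r S u1 u2 v1 v2 :: real
  assumes S: "S\<^sup>2 = q\<^sup>2 - p * r" and H: "q\<^sup>2 - p * r \<noteq> 0" and "q + S \<noteq> 0"
  shows "((r * u1 - q * u2) / (p * r - q\<^sup>2)) * v1 + ((- q * u1 + p * u2) / (p * r - q\<^sup>2)) * v2
    = (q + S) / (2 * (q\<^sup>2 - p * r)) *
      ((u1 - p / (q + S) * u2) * (v2 - r / (q + S) * v1) + (u2 - r / (q + S) * u1) * (v1 - p / (q + S) * v2))"
proof -
  define P where "P = q + S"
  have P: "P \<noteq> 0" using assms(3) unfolding P_def .
  have pr: "p * r = (q - S) * P" using S unfolding P_def by (simp add: algebra_simps power2_eq_square)
  have "P * ((u1 - p / P * u2) * (v2 - r / P * v1) + (u2 - r / P * u1) * (v1 - p / P * v2))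
      = (P + p * r / P) * (u1 * v2 + u2 * v1) - 2 * r * u1 * v1 - 2 * p * u2 * v2"
    using P by (simp add: field_simps power2_eq_square)
  also have "P + p * r / P = 2 * q" using P pr unfolding P_def by (simp add: field_simps)
  finally have "P / (2 * (q\<^sup>2 - p * r)) * ((u1 - p / P * u2) * (v2 - r / P * v1) + (u2 - r / P * u1) * (v1 - p / P * v2))
      = (2 * q * (u1 * v2 + u2 * v1) - 2 * r * u1 * v1 - 2 * p * u2 * v2) / (2 * (q\<^sup>2 - p * r))"
    by (metis mult.commute times_divide_eq_left)
  also have "\<dots> = ((r * u1 - q * u2) * v1 + (- q * u1 + p * u2) * v2) / (p * r - q\<^sup>2)"
    using H by (simp add: frac_eq_eq) (simp add: algebra_simps)
  finally show ?thesis unfolding P_def by (simp add: add_divide_distrib)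
qed

lemma perturbed_difference_bound:
  fixes x y X Y B B0 s :: real
  assumes "\<bar>x - X\<bar> \<le> 4 * s" "\<bar>y - Y\<bar> \<le> 4 * s" "\<bar>Y\<bar> \<le> 8"
    and "\<bar>B\<bar> \<le> 1/10" "\<bar>B - B0\<bar> \<le> s / 100000"
  shows "\<bar>(x - B * y) - (X - B0 * Y)\<bar> \<le> 5 * s"
proof -
  have "(x - B * y) - (X - B0 * Y) = (x - X) - B * (y - Y) - (B - B0) * Y"
    by (simp add: algebra_simps)
  moreover have "\<bar>B * (y - Y)\<bar> \<le> 1/10 * (4 * s)"
    unfolding abs_mult using assms by (intro mult_mono) auto
  moreover have "\<bar>(B - B0) * Y\<bar> \<le> s / 100000 * 8"
    unfolding abs_mult using assms by (intro mult_mono) auto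
  ultimately show ?thesis using assms(1) by linarith
qed

lemma abs_add_eq_if_same_sign:
  fixes x y :: real
  assumes "0 \<le> x * y"
  shows "\<bar>x + y\<bar> = \<bar>x\<bar> + \<bar>y\<bar>"
  using assms by (auto simp: zero_le_mult_iff)

lemma same_sign_product_lower_bound:
  fixes s T1 T2 a1 a2 b1 b2 :: real
  assumes "50 * s \<le> \<bar>T1\<bar>" "50 * s \<le> \<bar>T2\<bar>"
    and "\<bar>a1 - T1\<bar> \<le> 5 * s" "\<bar>b1 - T1\<bar> \<le> 5 * s" "\<bar>a2 - T2\<bar> \<le> 5 * s" "\<bar>b2 - T2\<bar> \<le> 5 * s"
  shows "4050 * s\<^sup>2 \<le> \<bar>a1 * b2 + a2 * b1\<bar>"
proof -
  \<comment> \<open>a perturbation of size \<open>5s\<close> of a number of modulus \<open>\<ge> 50s\<close> keeps its sign\<close>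
  have near: "0 \<le> x * y \<and> 45 * s \<le> \<bar>x\<bar> \<and> 45 * s \<le> \<bar>y\<bar>"
    if "50 * s \<le> \<bar>T\<bar>" "\<bar>x - T\<bar> \<le> 5 * s" "\<bar>y - T\<bar> \<le> 5 * s" for x y T :: real
  proof (cases "0 \<le> T")
    case True
    with that have "45 * s \<le> x" "45 * s \<le> y" "0 \<le> s" by linarith+
    then show ?thesis by simp
  next
    case False
    with that have "x \<le> - 45 * s" "y \<le> - 45 * s" "0 \<le> s" by linarith+
    then show ?thesis by (simp add: zero_le_mult_iff)
  qed
  have "0 \<le> s" using abs_ge_zero[of "a1 - T1"] assms(3) by linarith
  with near[OF assms(1,3,4)] near[OF assms(2,5,6)]
  have "0 \<le> (a1 * b1) * (a2 * b2)" and large: "45 * s \<le> \<bar>a1\<bar>" "45 * s \<le> \<bar>b2\<bar>"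
    "45 * s \<le> \<bar>a2\<bar>" "45 * s \<le> \<bar>b1\<bar>" "0 \<le> 45 * s"
    by auto
  then have "\<bar>a1 * b2 + a2 * b1\<bar> = \<bar>a1\<bar> * \<bar>b2\<bar> + \<bar>a2\<bar> * \<bar>b1\<bar>"
    by (subst abs_add_eq_if_same_sign) (simp_all add: abs_mult mult_ac)
  moreover have "45 * s * (45 * s) \<le> \<bar>a1\<bar> * \<bar>b2\<bar>" "45 * s * (45 * s) \<le> \<bar>a2\<bar> * \<bar>b1\<bar>"
    using large by (intro mult_mono; simp)+
  ultimately show ?thesis by (simp add: power2_eq_square)
qed

lemma Gamma_form_lower_bound:
  fixes p q r p0 q0 r0 u1 u2 v1 v2 U1 U2 s :: real
  assumes hess: "near_standard_hessian p q r" and hess0: "near_standard_hessian p0 q0 r0"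
    and hess_close: "\<bar>p - p0\<bar> \<le> s / 100000" "\<bar>q - q0\<bar> \<le> s / 100000" "\<bar>r - r0\<bar> \<le> s / 100000"
    and grad_close: "\<bar>u1 - U1\<bar> \<le> 4 * s" "\<bar>u2 - U2\<bar> \<le> 4 * s" "\<bar>v1 - U1\<bar> \<le> 4 * s" "\<bar>v2 - U2\<bar> \<le> 4 * s"
    and grad_bound: "\<bar>U1\<bar> \<le> 8" "\<bar>U2\<bar> \<le> 8"
    and transversal: "50 * s \<le> \<bar>U1 - hyp_coeff p0 q0 r0 * U2\<bar>" "50 * s \<le> \<bar>U2 - hyp_coeff r0 q0 p0 * U1\<bar>"
  shows "4 * s\<^sup>2 \<le> \<bar>((r * u1 - q * u2) / (p * r - q\<^sup>2)) * v1 + ((- q * u1 + p * u2) / (p * r - q\<^sup>2)) * v2\<bar>"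
proof -
  define S where "S = sqrt (q\<^sup>2 - p * r)"
  define B A where "B = hyp_coeff p q r" and "A = hyp_coeff r q p"
  note bounds = near_standard_hessian_bounds[OF hess, folded S_def]
  have B_eq: "B = p / (q + S)" and A_eq: "A = r / (q + S)"
    unfolding A_def B_def S_def hyp_coeff_def by (simp_all add: mult.commute)
  have hess': "near_standard_hessian r q p" "near_standard_hessian r0 q0 p0"
    using hess hess0 by (simp_all add: near_standard_hessian_commute)
  have coeff_close: "\<bar>B - hyp_coeff p0 q0 r0\<bar> \<le> s / 100000" "\<bar>A - hyp_coeff r0 q0 p0\<bar> \<le> s / 100000"
    unfolding A_def B_def using hyp_coeff_lipschitz hess hess0 hess' hess_close by blast+
  have coeff_small: "\<bar>B\<bar> \<le> 1/10" "\<bar>A\<bar> \<le> 1/10"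
    unfolding A_def B_def using hyp_coeff_bound hess hess' by blast+
  have "\<bar>(u1 - B * u2) - (U1 - hyp_coeff p0 q0 r0 * U2)\<bar> \<le> 5 * s"
    "\<bar>(v1 - B * v2) - (U1 - hyp_coeff p0 q0 r0 * U2)\<bar> \<le> 5 * s"
    "\<bar>(u2 - A * u1) - (U2 - hyp_coeff r0 q0 p0 * U1)\<bar> \<le> 5 * s"
    "\<bar>(v2 - A * v1) - (U2 - hyp_coeff r0 q0 p0 * U1)\<bar> \<le> 5 * s"
    using perturbed_difference_bound[OF grad_close(1,2) grad_bound(2) coeff_small(1) coeff_close(1)]
      perturbed_difference_bound[OF grad_close(3,4) grad_bound(2) coeff_small(1) coeff_close(1)]
      perturbed_difference_bound[OF grad_close(2,1) grad_bound(1) coeff_small(2) coeff_close(2)]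
      perturbed_difference_bound[OF grad_close(4,3) grad_bound(1) coeff_small(2) coeff_close(2)]
    by simp_all
  with transversal
  have product: "4050 * s\<^sup>2 \<le> \<bar>(u1 - B * u2) * (v2 - A * v1) + (u2 - A * u1) * (v1 - B * v2)\<bar>"
    by (rule same_sign_product_lower_bound)
  define c where "c = (q + S) / (2 * (q\<^sup>2 - p * r))"
  have "S\<^sup>2 = q\<^sup>2 - p * r" using bounds(1) unfolding S_def by simp
  then have factorization: "((r * u1 - q * u2) / (p * r - q\<^sup>2)) * v1 + ((- q * u1 + p * u2) / (p * r - q\<^sup>2)) * v2
      = c * ((u1 - B * u2) * (v2 - A * v1) + (u2 - A * u1) * (v1 - B * v2))"
    unfolding A_eq B_eq c_def using bounds(1,4) by (intro Gamma_form_factorization) auto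
  have c: "1/2 \<le> c"
    using bounds unfolding c_def by (simp add: le_divide_eq)
  have "4 * s\<^sup>2 \<le> 1/2 * (4050 * s\<^sup>2)" by simp
  also have "\<dots> \<le> c * \<bar>(u1 - B * u2) * (v2 - A * v1) + (u2 - A * u1) * (v1 - B * v2)\<bar>"
    using c product by (intro mult_mono) auto
  finally show ?thesis
    unfolding factorization using c by (simp add: abs_mult)
qed

locale hyp_derivs =
  fixes M :: nat and phi :: "real \<times> real \<Rightarrow> real" and D :: "nat \<Rightarrow> nat \<Rightarrow> real \<times> real \<Rightarrow> real"
  assumes order: "3 \<le> M"
    and CM: "CM_derivs M phi D"
    and hessian_origin: "D 2 0 (0, 0) = 0" "D 1 1 (0, 0) = 1" "D 0 2 (0, 0) = 0"
    and third_derivs: "\<And>a b z. a + b = 3 \<Longrightarrow> z \<in> Sigma2 \<Longrightarrow> \<bar>D a b z\<bar> \<le> 1/100000"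

lemma Hyp_imp_hyp_derivs:
  assumes "phi \<in> Hyp M" and "3 \<le> M"
  obtains D where "hyp_derivs M phi D"
proof -
  from assms(1) obtain D where CM: "CM_derivs M phi D"
    and origin: "D 2 0 (0, 0) = 0" "D 1 1 (0, 0) = 1" "D 0 2 (0, 0) = 0"
    and third: "\<forall>a b. 3 \<le> a + b \<and> a + b \<le> M \<longrightarrow> (\<forall>z\<in>Sigma2. \<bar>D a b z\<bar> \<le> 10 powi (-5))"
    unfolding Hyp_def by blast
  have "(10::real) powi (-5) = 1/100000" by (simp add: power_int_minus)
  with third assms(2) have "\<bar>D a b z\<bar> \<le> 1/100000" if "a + b = 3" "z \<in> Sigma2" for a b z
    using that by auto
  with CM origin assms(2) show ?thesis
    using that unfolding hyp_derivs_def by blast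
qed

context hyp_derivs
begin

lemma second_derivs_lipschitz:
  assumes "a + b = 2" "z \<in> Sigma2" "z' \<in> Sigma2"
  shows "\<bar>D a b z - D a b z'\<bar> \<le> taxicab_dist z z' / 100000"
  using CM_derivs_lipschitz[OF CM, of a b "1/100000"] third_derivs assms order by simp

lemma second_derivs_near_origin:
  assumes "z \<in> Sigma2"
  shows "\<bar>D 2 0 z\<bar> \<le> 1/10000" "\<bar>D 1 1 z - 1\<bar> \<le> 1/10000" "\<bar>D 0 2 z\<bar> \<le> 1/10000"
proof -
  have O: "(0, 0) \<in> Sigma2" by (simp add: Sigma2_def)
  have "\<bar>D a b z - D a b (0, 0)\<bar> \<le> 1/10000" if "a + b = 2" for a b
    using second_derivs_lipschitz[OF that assms O] taxicab_dist_Sigma2[OF assms O] by linarith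
  from this[of 2 0] this[of 1 1] this[of 0 2]
  show "\<bar>D 2 0 z\<bar> \<le> 1/10000" "\<bar>D 1 1 z - 1\<bar> \<le> 1/10000" "\<bar>D 0 2 z\<bar> \<le> 1/10000"
    using hessian_origin by simp_all
qed

lemma first_derivs_lipschitz:
  assumes "a + b = 1" "z \<in> Sigma2" "z' \<in> Sigma2"
  shows "\<bar>D a b z - D a b z'\<bar> \<le> 2 * taxicab_dist z z'"
proof (rule CM_derivs_lipschitz[OF CM _ _ assms(2,3)])
  show "a + b < M" using assms(1) order by simp
  fix w assume "w \<in> Sigma2"
  from second_derivs_near_origin[OF this]
  have "\<bar>D 2 0 w\<bar> \<le> 2" "\<bar>D 1 1 w\<bar> \<le> 2" "\<bar>D 0 2 w\<bar> \<le> 2"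
    by linarith+
  moreover have "a = 1 \<and> b = 0 \<or> a = 0 \<and> b = 1" using assms(1) by auto
  ultimately show "\<bar>D (Suc a) b w\<bar> \<le> 2 \<and> \<bar>D a (Suc b) w\<bar> \<le> 2"
    by (auto simp: numeral_2_eq_2)
qed

lemma partials_eq_derivs:
  assumes "z \<in> open_square"
  shows "px phi z = D 1 0 z" "py phi z = D 0 1 z"
    "phi_xx phi z = D 2 0 z" "phi_xy phi z = D 1 1 z" "phi_yy phi z = D 0 2 z"
proof -
  have phi: "phi w = D 0 0 w" if "w \<in> open_square" for w
    using CM that open_square_subset_Sigma2 by (auto simp: CM_derivs_def)
  have px: "px phi w = D 1 0 w" and py: "py phi w = D 0 1 w" if "w \<in> open_square" for w
    using px_eq_CM_deriv[OF CM _ phi that] py_eq_CM_deriv[OF CM _ phi that] order by simp_all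
  show "px phi z = D 1 0 z" "py phi z = D 0 1 z" using px py assms by simp_all
  show "phi_xx phi z = D 2 0 z" "phi_xy phi z = D 1 1 z" "phi_yy phi z = D 0 2 z"
    unfolding phi_xx_def phi_xy_def phi_yy_def
    using px_eq_CM_deriv[OF CM _ px assms] py_eq_CM_deriv[OF CM _ px assms]
      py_eq_CM_deriv[OF CM _ py assms] order by (simp_all add: numeral_2_eq_2)
qed

lemma Sigma1_in_domains: "z \<in> Sigma1 \<Longrightarrow> z \<in> open_square \<and> z \<in> Sigma2"
  using Sigma1_subset_open_square open_square_subset_Sigma2 by auto

lemma near_standard_hessian:
  assumes "z \<in> Sigma1"
  shows "near_standard_hessian (phi_xx phi z) (phi_xy phi z) (phi_yy phi z)"
proof -
  from Sigma1_in_domains[OF assms] have z: "z \<in> open_square" "z \<in> Sigma2" by auto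
  show ?thesis
    using second_derivs_near_origin[OF z(2)]
    unfolding near_standard_hessian_def partials_eq_derivs[OF z(1)] by auto
qed

lemma hessian_lipschitz:
  assumes "z \<in> Sigma1" "z' \<in> Sigma1"
  shows "\<bar>phi_xx phi z - phi_xx phi z'\<bar> \<le> taxicab_dist z z' / 100000"
    "\<bar>phi_xy phi z - phi_xy phi z'\<bar> \<le> taxicab_dist z z' / 100000"
    "\<bar>phi_yy phi z - phi_yy phi z'\<bar> \<le> taxicab_dist z z' / 100000"
proof -
  from Sigma1_in_domains assms have "z \<in> open_square" "z' \<in> open_square" "z \<in> Sigma2" "z' \<in> Sigma2"
    by auto
  with second_derivs_lipschitz[of 2 0 z z'] second_derivs_lipschitz[of 1 1 z z']
    second_derivs_lipschitz[of 0 2 z z']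
  show "\<bar>phi_xx phi z - phi_xx phi z'\<bar> \<le> taxicab_dist z z' / 100000"
    "\<bar>phi_xy phi z - phi_xy phi z'\<bar> \<le> taxicab_dist z z' / 100000"
    "\<bar>phi_yy phi z - phi_yy phi z'\<bar> \<le> taxicab_dist z z' / 100000"
    by (simp_all add: partials_eq_derivs)
qed

lemma gradient_lipschitz:
  assumes "z \<in> Sigma1" "z' \<in> Sigma1"
  shows "\<bar>px phi z - px phi z'\<bar> \<le> 2 * taxicab_dist z z'"
    "\<bar>py phi z - py phi z'\<bar> \<le> 2 * taxicab_dist z z'"
proof -
  from Sigma1_in_domains assms have "z \<in> open_square" "z' \<in> open_square" "z \<in> Sigma2" "z' \<in> Sigma2"
    by auto
  with first_derivs_lipschitz[of 1 0 z z'] first_derivs_lipschitz[of 0 1 z z']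
  show "\<bar>px phi z - px phi z'\<bar> \<le> 2 * taxicab_dist z z'"
    "\<bar>py phi z - py phi z'\<bar> \<le> 2 * taxicab_dist z z'"
    by (simp_all add: partials_eq_derivs)
qed

lemma hessian_close_in_cap:
  assumes "c \<in> Sigma1" "w \<in> cap s c"
  shows "\<bar>phi_xx phi w - phi_xx phi c\<bar> \<le> s / 100000"
    "\<bar>phi_xy phi w - phi_xy phi c\<bar> \<le> s / 100000"
    "\<bar>phi_yy phi w - phi_yy phi c\<bar> \<le> s / 100000"
proof -
  have "w \<in> Sigma1" using assms(2) cap_subset_Sigma1 by blast
  with hessian_lipschitz[OF _ assms(1)] taxicab_dist_cap[OF assms(2)]
  show "\<bar>phi_xx phi w - phi_xx phi c\<bar> \<le> s / 100000"
    "\<bar>phi_xy phi w - phi_xy phi c\<bar> \<le> s / 100000"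
    "\<bar>phi_yy phi w - phi_yy phi c\<bar> \<le> s / 100000"
    by (meson divide_right_mono order_trans zero_le_numeral)+
qed

lemma gradient_increment_close_in_caps:
  assumes "c1 \<in> Sigma1" "c2 \<in> Sigma1" "w1 \<in> cap s c1" "w2 \<in> cap s c2"
  shows "\<bar>(px phi w2 - px phi w1) - (px phi c2 - px phi c1)\<bar> \<le> 4 * s"
    "\<bar>(py phi w2 - py phi w1) - (py phi c2 - py phi c1)\<bar> \<le> 4 * s"
proof -
  have "w1 \<in> Sigma1" "w2 \<in> Sigma1" using assms(3,4) cap_subset_Sigma1 by blast+
  with assms gradient_lipschitz[of w1 c1] gradient_lipschitz[of w2 c2]
    taxicab_dist_cap[OF assms(3)] taxicab_dist_cap[OF assms(4)]
  show "\<bar>(px phi w2 - px phi w1) - (px phi c2 - px phi c1)\<bar> \<le> 4 * s"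
    "\<bar>(py phi w2 - py phi w1) - (py phi c2 - py phi c1)\<bar> \<le> 4 * s"
    by linarith+
qed

lemma gradient_increment_bound:
  assumes "c1 \<in> Sigma1" "c2 \<in> Sigma1"
  shows "\<bar>px phi c2 - px phi c1\<bar> \<le> 8" "\<bar>py phi c2 - py phi c1\<bar> \<le> 8"
  using gradient_lipschitz[OF assms(2,1)] taxicab_dist_Sigma1[OF assms(2,1)] by linarith+

end

theorem mainTheorem9:
  fixes M :: nat and phi :: "real \<times> real \<Rightarrow> real" and K mu :: real
    and zc1 zc2 :: "real \<times> real"
  assumes "M \<ge> 3" and "phi \<in> Hyp M" and "K \<ge> 1" and "mu \<ge> 1"
    and "zc1 \<in> Sigma1" and "zc2 \<in> Sigma1"
    and "\<bar>t1 phi zc2 zc1 zc2\<bar> \<ge> 50 * sqrt mu / K"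
    and "\<bar>t2 phi zc2 zc1 zc2\<bar> \<ge> 50 * sqrt mu / K"
  shows "\<forall>z1\<in>cap (sqrt mu / K) zc1. \<forall>z1'\<in>cap (sqrt mu / K) zc1.
           \<forall>z\<in>cap (sqrt mu / K) zc2. \<forall>z2\<in>cap (sqrt mu / K) zc2. \<forall>z2'\<in>cap (sqrt mu / K) zc2.
             \<bar>Gamma phi z z1 z2 z1' z2'\<bar> \<ge> 4 * mu / K\<^sup>2"
proof (intro ballI)
  define s where "s = sqrt mu / K"
  fix z1 z1' z z2 z2'
  assume caps: "z1 \<in> cap s zc1" "z1' \<in> cap s zc1" "z \<in> cap s zc2" "z2 \<in> cap s zc2" "z2' \<in> cap s zc2"
  obtain D where "hyp_derivs M phi D" using Hyp_imp_hyp_derivs assms(1,2) by blast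
  then interpret hyp_derivs M phi D .
  have "4 * s\<^sup>2 \<le> \<bar>Gamma phi z z1 z2 z1' z2'\<bar>"
    unfolding Gamma_def Let_def
  proof (rule Gamma_form_lower_bound[OF near_standard_hessian near_standard_hessian
        hessian_close_in_cap[OF assms(6) caps(3)]
        gradient_increment_close_in_caps(1,2)[OF assms(5,6) caps(1,4)]
        gradient_increment_close_in_caps(1,2)[OF assms(5,6) caps(2,5)]
        gradient_increment_bound[OF assms(5,6)]])
    show "z \<in> Sigma1" "zc2 \<in> Sigma1" using caps(3) cap_subset_Sigma1 assms(6) by blast+
    show "50 * s \<le> \<bar>px phi zc2 - px phi zc1 - hyp_coeff (phi_xx phi zc2) (phi_xy phi zc2) (phi_yy phi zc2) * (py phi zc2 - py phi zc1)\<bar>"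
      using assms(7) unfolding t1_eq_hyp_coeff s_def by simp
    show "50 * s \<le> \<bar>py phi zc2 - py phi zc1 - hyp_coeff (phi_yy phi zc2) (phi_xy phi zc2) (phi_xx phi zc2) * (px phi zc2 - px phi zc1)\<bar>"
      using assms(8) unfolding t2_eq_hyp_coeff s_def by simp
  qed
  moreover have "4 * mu / K\<^sup>2 = 4 * s\<^sup>2"
    using assms(3,4) by (simp add: s_def power_divide)
  ultimately show "4 * mu / K\<^sup>2 \<le> \<bar>Gamma phi z z1 z2 z1' z2'\<bar>" by simp
qed

end
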